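(* Let $\Sigma$ be an alphabet and let $A$, $B$, $C$ be modules over $\Sigma$ with pairwise disjoint node sets. Then $(A \bullet B) \bullet C$ and $A \bullet (B \bullet C)$ are both defined and are isomorphic modules, i.e. $(A\bullet B)\bullet C = A\bullet(B\bullet C)$ up to renaming of nodes.
   Context: An alphabet $\Sigma$ is a finite set of labels. An interface over $\Sigma$ is a finite set $R$ in which every element carries a label from $\Sigma$ and a positive integer index, such that for each label $l$, if $R$ contains exactly $k$ elements labeled $l$, these carry the indices $1,\dots,k$. An element has a fixed label, but may carry different indices in different interfaces. A module $G$ over $\Sigma$ is a finite directed graph $(V,E)$ together with two interfaces over $\Sigma$, the left interface ${}^*G\subseteq V$ and the right interface $G^*\subseteq V$ (not necessarily disjoint). Two modules are isomorphic if there is a bijection between their node sets preserving edges, membership in the left and right interfaces, labels, and indices in each interface. Harmonic pairs: for disjoint interfaces $R,S$, elements $r\in R$, $s\in S$ form a harmonic pair $\{r,s\}$ (with label $l$ and index $n$) if both have label $l$, $r$ has index $n$ in $R$ and $s$ has index $n$ in $S$. Composition: let $A,B$ be modules with disjoint node sets. For each node $x$ of $A$ or $B$ put $x'=\{x,y\}$ if $\{x,y\}$ is a harmonic pair of $A^*$ and ${}^*B$, and $x'=x$ otherwise. For a label $l$ let $m_l$ be the number of $l$-labeled harmonic pairs of $A^*$ and ${}^*B$. The module $A\bullet B$ has nodes all $x'$ ($x$ a node of $A$ or $B$) and edges all $(x',z')$ with $(x,z)$ an edge of $A$ or of $B$. Left interface ${}^*(A\bullet B)$: for each $x\in{}^*A$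 with label $l$ and index $n$ in ${}^*A$, $x'$ belongs to it with label $l$ and index $n$; for each $x\in{}^*B$ without harmonic partner in $A^*$, with label $l$ and index $n$ in ${}^*B$, $x$ belongs to it with index $p+n-m_l$, where $p$ is the number of $l$-labeled elements of ${}^*A$. Right interface $(A\bullet B)^*$: for each $x\in B^*$ with label $l$ and index $n$ in $B^*$, $x'$ belongs to it with label $l$ and index $n$; for each $x\in A^*$ without harmonic partner in ${}^*B$, with label $l$ and index $n$ in $A^*$, $x$ belongs to it with index $q+n-m_l$, where $q$ is the number of $l$-labeled elements of $B^*$. *)

theory Defs
  imports Main
begin

text \<open>A module: nodes, directed edges, and two interfaces. An interface is a partial
map sending each of its elements to its (label, index).\<close>

record ('v, 'l) module =
  nodes :: "'v set"
  edges :: "('v \<times> 'v) set"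
  lif   :: "'v \<Rightarrow> ('l \<times> nat) option"
  rif   :: "'v \<Rightarrow> ('l \<times> nat) option"

definition lab_of :: "('v \<Rightarrow> ('l \<times> nat) option) \<Rightarrow> 'v \<Rightarrow> 'l" where
  "lab_of R x = fst (the (R x))"

definition idx_of :: "('v \<Rightarrow> ('l \<times> nat) option) \<Rightarrow> 'v \<Rightarrow> nat" where
  "idx_of R x = snd (the (R x))"

definition with_label :: "('v \<Rightarrow> ('l \<times> nat) option) \<Rightarrow> 'l \<Rightarrow> 'v set" where
  "with_label R l = {x \<in> dom R. lab_of R x = l}"

definition interface :: "'l set \<Rightarrow> ('v \<Rightarrow> ('l \<times> nat) option) \<Rightarrow> bool" where
  "interface \<Sigma> R \<longleftrightarrow> finite (dom R) \<and> (\<forall>x\<in>dom R. lab_of R x \<in> \<Sigma>) \<and>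
     (\<forall>l. inj_on (idx_of R) (with_label R l) \<and>
          idx_of R ` with_label R l = {1..card (with_label R l)})"

definition is_module :: "'l set \<Rightarrow> ('v, 'l) module \<Rightarrow> bool" where
  "is_module \<Sigma> G \<longleftrightarrow> finite \<Sigma> \<and> finite (nodes G) \<and> edges G \<subseteq> nodes G \<times> nodes G \<and>
     dom (lif G) \<subseteq> nodes G \<and> dom (rif G) \<subseteq> nodes G \<and>
     interface \<Sigma> (lif G) \<and> interface \<Sigma> (rif G) \<and>
     (\<forall>x \<in> dom (lif G) \<inter> dom (rif G). lab_of (lif G) x = lab_of (rif G) x)"

definition harmonic :: "('v \<Rightarrow> ('l \<times> nat) option) \<Rightarrow> ('v \<Rightarrow> ('l \<times> nat) option) \<Rightarrow> 'v \<Rightarrow> 'v \<Rightarrow> bool" where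
  "harmonic R S r s \<longleftrightarrow> R r \<noteq> None \<and> R r = S s"

definition hp :: "('v, 'l) module \<Rightarrow> ('v, 'l) module \<Rightarrow> 'v \<Rightarrow> 'v \<Rightarrow> bool" where
  "hp A B x y \<longleftrightarrow> x \<in> nodes A \<and> y \<in> nodes B \<and> harmonic (rif A) (lif B) x y"

text \<open>The node x' of the composite: {x,y} for a harmonic pair {x,y}; otherwise x,
  represented by the singleton {x}.\<close>
definition prime :: "('v, 'l) module \<Rightarrow> ('v, 'l) module \<Rightarrow> 'v \<Rightarrow> 'v set" where
  "prime A B x = {x} \<union> {y. hp A B x y} \<union> {y. hp A B y x}"

definition mcount :: "('v, 'l) module \<Rightarrow> ('v, 'l) module \<Rightarrow> 'l \<Rightarrow> nat" where
  "mcount A B l = card {(x, y). hp A B x y \<and> lab_of (rif A) x = l}"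

definition compose :: "('v, 'l) module \<Rightarrow> ('v, 'l) module \<Rightarrow> ('v set, 'l) module"
  (infixl "\<bullet>" 70) where
  "compose A B = \<lparr>
     nodes = prime A B ` (nodes A \<union> nodes B),
     edges = (\<lambda>(x, z). (prime A B x, prime A B z)) ` (edges A \<union> edges B),
     lif = (\<lambda>s. if \<exists>x. x \<in> dom (lif A) \<and> s = prime A B x
                then lif A (THE x. x \<in> dom (lif A) \<and> s = prime A B x)
                else if \<exists>x. x \<in> dom (lif B) \<and> \<not> (\<exists>y. hp A B y x) \<and> s = prime A B x
                then (let x = THE x. x \<in> dom (lif B) \<and> \<not> (\<exists>y. hp A B y x) \<and> s = prime A B x;
                          l = lab_of (lif B) x
                      in Some (l, card (with_label (lif A) l) + idx_of (lif B) x - mcount A B l))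
                else None),
     rif = (\<lambda>s. if \<exists>x. x \<in> dom (rif B) \<and> s = prime A B x
                then rif B (THE x. x \<in> dom (rif B) \<and> s = prime A B x)
                else if \<exists>x. x \<in> dom (rif A) \<and> \<not> (\<exists>y. hp A B x y) \<and> s = prime A B x
                then (let x = THE x. x \<in> dom (rif A) \<and> \<not> (\<exists>y. hp A B x y) \<and> s = prime A B x;
                          l = lab_of (rif A) x
                      in Some (l, card (with_label (rif B) l) + idx_of (rif A) x - mcount A B l))
                else None) \<rparr>"

definition composable :: "('v, 'l) module \<Rightarrow> ('v, 'l) module \<Rightarrow> bool" where
  "composable A B \<longleftrightarrow> nodes A \<inter> nodes B = {}"

text \<open>Canonical renaming x \<mapsto> {x}, needed to put a module on the node type of composites.\<close>
definition lift :: "('v, 'l) module \<Rightarrow> ('v set, 'l) module" where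
  "lift G = \<lparr> nodes = (\<lambda>x. {x}) ` nodes G,
             edges = (\<lambda>(x, z). ({x}, {z})) ` edges G,
             lif = (\<lambda>s. if is_singleton s then lif G (the_elem s) else None),
             rif = (\<lambda>s. if is_singleton s then rif G (the_elem s) else None) \<rparr>"

definition module_iso :: "('a, 'l) module \<Rightarrow> ('b, 'l) module \<Rightarrow> bool" where
  "module_iso G H \<longleftrightarrow> (\<exists>f. bij_betw f (nodes G) (nodes H) \<and>
     (\<forall>x \<in> nodes G. \<forall>z \<in> nodes G. (x, z) \<in> edges G \<longleftrightarrow> (f x, f z) \<in> edges H) \<and>
     (\<forall>x \<in> nodes G. lif H (f x) = lif G x \<and> rif H (f x) = rif G x) \<and>
     dom (lif H) \<subseteq> nodes H \<and> dom (rif H) \<subseteq> nodes H \<and>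
     dom (lif G) \<subseteq> nodes G \<and> dom (rif G) \<subseteq> nodes G)"

end

theory Submission
  imports Defs
begin

text \<open>
  Every node of either triple composite is the image of a node of A, B or C, so it suffices to
  show that two such nodes are merged in (A \<bullet> B) \<bullet> C iff they are merged in A \<bullet> (B \<bullet> C), and
  that both composites give the merged node the same interface entries. Identifications through
  a harmonic pair with B are made in both bracketings. The only other identifications pair a
  right-interface node of A with a left-interface node of C, both left unmatched by B; each
  bracketing renumbers them past the matched indices of B, and the two renumberings agree.
  Swapping left and right interfaces reverses composition, which turns every statement about
  left interfaces into the corresponding one about right interfaces.
\<close>

section \<open>Interfaces\<close>

definition label_count :: "('v \<Rightarrow> ('l \<times> nat) option) \<Rightarrow> 'l \<Rightarrow> nat" where
  "label_count R l = card (with_label R l)"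

lemma with_label_iff: "x \<in> with_label R l \<longleftrightarrow> (\<exists>n. R x = Some (l, n))"
  by (auto simp: with_label_def lab_of_def)

lemma interface_indexD:
  assumes "interface \<Sigma> R" "R x = Some (l, n)"
  shows "l \<in> \<Sigma> \<and> 1 \<le> n \<and> n \<le> label_count R l"
proof -
  have x: "x \<in> with_label R l" using assms(2) by (simp add: with_label_iff)
  have "idx_of R x = n" using assms(2) by (simp add: idx_of_def)
  moreover have "idx_of R x \<in> {1..label_count R l}"
    using assms(1) x unfolding interface_def label_count_def by blast
  moreover have "l \<in> \<Sigma>" using assms unfolding interface_def lab_of_def by force
  ultimately show ?thesis by auto
qed

lemma interface_index_exists:
  assumes "interface \<Sigma> R" "1 \<le> n" "n \<le> label_count R l"
  obtains x where "R x = Some (l, n)"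
proof -
  have "n \<in> idx_of R ` with_label R l" using assms unfolding interface_def label_count_def by auto
  then obtain x where "x \<in> with_label R l" "idx_of R x = n" by auto
  then show ?thesis using that by (auto simp: with_label_iff idx_of_def)
qed

lemma interface_index_unique:
  assumes "interface \<Sigma> R" "R x = Some (l, n)" "R y = Some (l, n)"
  shows "x = y"
proof -
  have "inj_on (idx_of R) (with_label R l)" using assms(1) unfolding interface_def by blast
  moreover have "x \<in> with_label R l" "y \<in> with_label R l" using assms by (auto simp: with_label_iff)
  moreover have "idx_of R x = idx_of R y" using assms by (simp add: idx_of_def)
  ultimately show ?thesis by (meson inj_onD)
qed

lemma interfaceI_label_count:
  assumes fin: "finite (dom R)"
    and bounds: "\<And>x l n. R x = Some (l, n) \<Longrightarrow> l \<in> \<Sigma> \<and> 1 \<le> n \<and> n \<le> N l"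
    and exists: "\<And>l n. 1 \<le> n \<Longrightarrow> n \<le> N l \<Longrightarrow> \<exists>x. R x = Some (l, n)"
    and unique: "\<And>x y l n. R x = Some (l, n) \<Longrightarrow> R y = Some (l, n) \<Longrightarrow> x = y"
  shows "interface \<Sigma> R \<and> (\<forall>l. label_count R l = N l)"
proof -
  have inj: "inj_on (idx_of R) (with_label R l)" for l
    by (rule inj_onI) (auto simp: with_label_iff idx_of_def intro: unique)
  have img: "idx_of R ` with_label R l = {1..N l}" for l
  proof
    show "idx_of R ` with_label R l \<subseteq> {1..N l}"
      using bounds by (auto simp: with_label_iff idx_of_def)
    show "{1..N l} \<subseteq> idx_of R ` with_label R l"
    proof
      fix n assume "n \<in> {1..N l}"
      then obtain x where "R x = Some (l, n)" using exists by auto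
      then show "n \<in> idx_of R ` with_label R l" by (force simp: with_label_iff idx_of_def)
    qed
  qed
  have "label_count R l = N l" for l
    using card_image[OF inj] img by (simp add: label_count_def)
  moreover have "\<forall>x\<in>dom R. lab_of R x \<in> \<Sigma>" using bounds by (auto simp: lab_of_def)
  ultimately show ?thesis using fin inj img unfolding interface_def by (simp add: label_count_def)
qed

section \<open>Reversed and renamed modules\<close>

definition dual :: "('v, 'l) module \<Rightarrow> ('v, 'l) module" where
  "dual G = \<lparr>nodes = nodes G, edges = edges G, lif = rif G, rif = lif G\<rparr>"

lemma dual_sel [simp]:
  "nodes (dual G) = nodes G" "edges (dual G) = edges G" "lif (dual G) = rif G" "rif (dual G) = lif G"
  by (simp_all add: dual_def)

lemma hp_dual: "hp (dual B) (dual A) x y = hp A B y x"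
  unfolding hp_def harmonic_def dual_sel by argo

lemma prime_dual: "prime (dual B) (dual A) = prime A B"
  by (rule ext) (auto simp: prime_def hp_dual)

lemma mcount_dual: "mcount (dual B) (dual A) = mcount A B"
proof
  fix l
  have "{(x, y). hp (dual B) (dual A) x y \<and> lab_of (rif (dual B)) x = l}
      = prod.swap ` {(x, y). hp A B x y \<and> lab_of (rif A) x = l}"
  proof (rule set_eqI)
    fix p
    show "p \<in> {(x, y). hp (dual B) (dual A) x y \<and> lab_of (rif (dual B)) x = l} \<longleftrightarrow>
      p \<in> prod.swap ` {(x, y). hp A B x y \<and> lab_of (rif A) x = l}"
    proof (cases p)
      case (Pair x y)
      have "hp A B y x \<Longrightarrow> lab_of (lif B) x = lab_of (rif A) y"
        by (simp add: hp_def harmonic_def lab_of_def)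
      then show ?thesis by (auto simp: Pair hp_dual image_iff)
    qed
  qed
  then show "mcount (dual B) (dual A) l = mcount A B l"
    unfolding mcount_def by (simp add: card_image)
qed

lemma dual_compose: "dual (A \<bullet> B) = dual B \<bullet> dual A"
  unfolding dual_def[of "A \<bullet> B"] compose_def
  by (simp add: prime_dual mcount_dual hp_dual Un_commute cong: if_cong)

lemma dual_lift: "dual (lift G) = lift (dual G)"
  unfolding dual_def[of "lift G"] lift_def by (simp cong: if_cong)

lemma is_module_dual: "is_module \<Sigma> (dual G) \<longleftrightarrow> is_module \<Sigma> G"
proof -
  have ball_swap: "(\<forall>x \<in> X \<inter> Y. f x = g x) \<longleftrightarrow> (\<forall>x \<in> Y \<inter> X. g x = f x)"
    for X Y :: "'v set" and f g :: "'v \<Rightarrow> 'l"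
    by auto
  show ?thesis unfolding is_module_def dual_sel ball_swap[of "dom (rif G)"] by auto
qed

lemma lift_sel:
  "nodes (lift G) = (\<lambda>x. {x}) ` nodes G"
  "edges (lift G) = (\<lambda>(x, z). ({x}, {z})) ` edges G"
  "lif (lift G) {x} = lif G x" "rif (lift G) {x} = rif G x"
  by (simp_all add: lift_def is_singleton_def)

lemma interface_singleton_lift:
  assumes "interface \<Sigma> R"
  shows "interface \<Sigma> (\<lambda>s. if is_singleton s then R (the_elem s) else None) \<and>
    (\<forall>l. label_count (\<lambda>s. if is_singleton s then R (the_elem s) else None) l = label_count R l)"
    (is "interface \<Sigma> ?R \<and> _")
proof -
  have R_singleton: "?R {x} = R x" for x by (simp add: is_singleton_def)
  have R_SomeD: "?R s = Some p \<Longrightarrow> \<exists>x. s = {x} \<and> R x = Some p" for s p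
    by (auto simp: is_singleton_def split: if_splits)
  show ?thesis
  proof (rule interfaceI_label_count)
    have "dom ?R \<subseteq> (\<lambda>x. {x}) ` dom R" using R_SomeD by blast
    moreover have "finite (dom R)" using assms by (simp add: interface_def)
    ultimately show "finite (dom ?R)" by (meson finite_imageI finite_subset)
  next
    fix s l n assume "?R s = Some (l, n)"
    then show "l \<in> \<Sigma> \<and> 1 \<le> n \<and> n \<le> label_count R l"
      using R_SomeD interface_indexD[OF assms] by blast
  next
    fix l n assume "1 \<le> n" "n \<le> label_count R l"
    then obtain x where "R x = Some (l, n)" by (rule interface_index_exists[OF assms])
    then show "\<exists>s. ?R s = Some (l, n)" using R_singleton by metis
  next
    fix s t l n assume "?R s = Some (l, n)" "?R t = Some (l, n)"
    then show "s = t" using R_SomeD interface_index_unique[OF assms] by metis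
  qed
qed

lemma is_module_lift:
  assumes "is_module \<Sigma> G"
  shows "is_module \<Sigma> (lift G)"
    and "label_count (lif (lift G)) l = label_count (lif G) l"
    and "label_count (rif (lift G)) l = label_count (rif G) l"
proof -
  have lif: "interface \<Sigma> (lif (lift G)) \<and> (\<forall>l. label_count (lif (lift G)) l = label_count (lif G) l)"
    and rif: "interface \<Sigma> (rif (lift G)) \<and> (\<forall>l. label_count (rif (lift G)) l = label_count (rif G) l)"
    using assms interface_singleton_lift by (auto simp: is_module_def lift_def)
  then show "label_count (lif (lift G)) l = label_count (lif G) l"
    "label_count (rif (lift G)) l = label_count (rif G) l" by blast+
  have dom_lif: "dom (lif (lift G)) = (\<lambda>x. {x}) ` dom (lif G)"
    and dom_rif: "dom (rif (lift G)) = (\<lambda>x. {x}) ` dom (rif G)"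
    by (auto simp: lift_def is_singleton_def image_iff split: if_splits)
  have labels: "\<forall>x \<in> dom (lif G) \<inter> dom (rif G). lab_of (lif G) x = lab_of (rif G) x"
    using assms by (simp add: is_module_def)
  have "lab_of (lif (lift G)) {x} = lab_of (rif (lift G)) {x}" if "x \<in> dom (lif G) \<inter> dom (rif G)" for x
    using bspec[OF labels that] by (simp add: lab_of_def lift_sel)
  then have "\<forall>s \<in> dom (lif (lift G)) \<inter> dom (rif (lift G)). lab_of (lif (lift G)) s = lab_of (rif (lift G)) s"
    unfolding dom_lif dom_rif by auto
  then show "is_module \<Sigma> (lift G)"
    using assms lif rif unfolding is_module_def dom_lif dom_rif by (auto simp: lift_sel)
qed

section \<open>Composition of two modules\<close>

lemma mem_prime: "x \<in> prime A B x"
  by (simp add: prime_def)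

lemma mem_prime_iff: "y \<in> prime A B x \<longleftrightarrow> y = x \<or> hp A B x y \<or> hp A B y x"
  by (auto simp: prime_def)

lemma prime_outside: "x \<notin> nodes A \<union> nodes B \<Longrightarrow> prime A B x = {x}"
  by (auto simp: prime_def hp_def)

lemma nodes_compose: "nodes (A \<bullet> B) = prime A B ` (nodes A \<union> nodes B)"
  by (simp add: compose_def)

lemma edges_compose: "edges (A \<bullet> B) = (\<lambda>(x, z). (prime A B x, prime A B z)) ` (edges A \<union> edges B)"
  by (simp add: compose_def)

locale module_pair =
  fixes \<Sigma> :: "'l set" and A B :: "('v, 'l) module"
  assumes module_A: "is_module \<Sigma> A" and module_B: "is_module \<Sigma> B"
    and disjoint: "nodes A \<inter> nodes B = {}"
begin

lemma interface_A: "interface \<Sigma> (lif A)" "interface \<Sigma> (rif A)"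
  and interface_B: "interface \<Sigma> (lif B)" "interface \<Sigma> (rif B)"
  using module_A module_B by (auto simp: is_module_def)

lemma in_nodes_A: "x \<in> dom (lif A) \<Longrightarrow> x \<in> nodes A" "x \<in> dom (rif A) \<Longrightarrow> x \<in> nodes A"
  and in_nodes_B: "x \<in> dom (lif B) \<Longrightarrow> x \<in> nodes B" "x \<in> dom (rif B) \<Longrightarrow> x \<in> nodes B"
  using module_A module_B by (auto simp: is_module_def)

lemma same_label_A: "lif A x = Some (l, k) \<Longrightarrow> rif A x = Some (l', k') \<Longrightarrow> l = l'"
  and same_label_B: "lif B x = Some (l, k) \<Longrightarrow> rif B x = Some (l', k') \<Longrightarrow> l = l'"
proof -
  have "\<forall>x \<in> dom (lif A) \<inter> dom (rif A). lab_of (lif A) x = lab_of (rif A) x"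
    and "\<forall>x \<in> dom (lif B) \<inter> dom (rif B). lab_of (lif B) x = lab_of (rif B) x"
    using module_A module_B by (simp_all add: is_module_def)
  then show "lif A x = Some (l, k) \<Longrightarrow> rif A x = Some (l', k') \<Longrightarrow> l = l'"
    and "lif B x = Some (l, k) \<Longrightarrow> rif B x = Some (l', k') \<Longrightarrow> l = l'"
    by (force simp: lab_of_def)+
qed

lemma hpD: "hp A B x y \<Longrightarrow> x \<in> nodes A \<and> y \<in> nodes B \<and> rif A x = lif B y \<and> rif A x \<noteq> None"
  unfolding hp_def harmonic_def by (metis (no_types))

lemma hpE:
  assumes "hp A B x y"
  obtains p where "x \<in> nodes A" "y \<in> nodes B" "rif A x = Some p" "lif B y = Some p"
  using hpD[OF assms] by (metis not_None_eq)

lemma hpI: "rif A x = Some p \<Longrightarrow> lif B y = Some p \<Longrightarrow> hp A B x y"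
  by (auto simp: hp_def harmonic_def intro: in_nodes_A in_nodes_B)

lemma hp_unique_right: "hp A B x y \<Longrightarrow> hp A B x y' \<Longrightarrow> y = y'"
  using hpD interface_index_unique[OF interface_B(1)] by (metis option.exhaust prod.exhaust)

lemma hp_unique_left: "hp A B x y \<Longrightarrow> hp A B x' y \<Longrightarrow> x = x'"
  using hpD interface_index_unique[OF interface_A(2)] by (metis option.exhaust prod.exhaust)

lemma not_hp_into_A: "x \<in> nodes A \<Longrightarrow> \<not> hp A B y x"
  and not_hp_from_B: "x \<in> nodes B \<Longrightarrow> \<not> hp A B x y"
  using hpD disjoint by blast+

lemma prime_hp: "hp A B x y \<Longrightarrow> prime A B x = {x, y} \<and> prime A B y = {x, y}"
  unfolding prime_def using hp_unique_right hp_unique_left hpD not_hp_into_A not_hp_from_B by blast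

lemma prime_eq_iff: "prime A B x = prime A B y \<longleftrightarrow> x = y \<or> hp A B x y \<or> hp A B y x"
  by (metis mem_prime_iff prime_hp mem_prime)

lemma prime_inj_on_A: "x \<in> nodes A \<Longrightarrow> x' \<in> nodes A \<Longrightarrow> prime A B x = prime A B x' \<Longrightarrow> x = x'"
  and prime_inj_on_B: "x \<in> nodes B \<Longrightarrow> x' \<in> nodes B \<Longrightarrow> prime A B x = prime A B x' \<Longrightarrow> x = x'"
  using prime_eq_iff not_hp_into_A not_hp_from_B by blast+

lemma matched_lif_B_iff:
  assumes y: "lif B y = Some (l, n)"
  shows "(\<exists>x. hp A B x y) \<longleftrightarrow> n \<le> label_count (rif A) l"
proof
  assume "\<exists>x. hp A B x y"
  then show "n \<le> label_count (rif A) l" using y hpD interface_indexD[OF interface_A(2)] by metis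
next
  assume le: "n \<le> label_count (rif A) l"
  have "1 \<le> n" using interface_indexD[OF interface_B(1) y] by simp
  then obtain x where "rif A x = Some (l, n)" using le by (rule interface_index_exists[OF interface_A(2)])
  then show "\<exists>x. hp A B x y" using hpI y by blast
qed

lemma matched_rif_A_iff:
  assumes x: "rif A x = Some (l, n)"
  shows "(\<exists>y. hp A B x y) \<longleftrightarrow> n \<le> label_count (lif B) l"
proof
  assume "\<exists>y. hp A B x y"
  then show "n \<le> label_count (lif B) l" using x hpD interface_indexD[OF interface_B(1)] by metis
next
  assume le: "n \<le> label_count (lif B) l"
  have "1 \<le> n" using interface_indexD[OF interface_A(2) x] by simp
  then obtain y where "lif B y = Some (l, n)" using le by (rule interface_index_exists[OF interface_B(1)])
  then show "\<exists>y. hp A B x y" using hpI x by blast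
qed

lemma hp_with_label_iff:
  "hp A B x y \<and> lab_of (rif A) x = l \<longleftrightarrow> (\<exists>n. rif A x = Some (l, n) \<and> lif B y = Some (l, n))"
proof
  assume "hp A B x y \<and> lab_of (rif A) x = l"
  then have hp: "hp A B x y" and lab: "lab_of (rif A) x = l" by auto
  obtain n where "rif A x = Some (l, n)"
    using hpD[OF hp] lab by (metis lab_of_def option.collapse prod.collapse)
  then show "\<exists>n. rif A x = Some (l, n) \<and> lif B y = Some (l, n)" using hpD[OF hp] by simp
next
  assume "\<exists>n. rif A x = Some (l, n) \<and> lif B y = Some (l, n)"
  then show "hp A B x y \<and> lab_of (rif A) x = l" using hpI by (auto simp: lab_of_def)
qed

text \<open>The index in A* identifies an l-labelled harmonic pair, and it ranges exactly over the
  indices below both interface counts.\<close>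
lemma mcount_eq_min: "mcount A B l = min (label_count (rif A) l) (label_count (lif B) l)"
proof -
  let ?S = "{(x, y). hp A B x y \<and> lab_of (rif A) x = l}"
  have S: "(x, y) \<in> ?S \<longleftrightarrow> (\<exists>n. rif A x = Some (l, n) \<and> lif B y = Some (l, n))" for x y
    using hp_with_label_iff by simp
  have inj: "inj_on (\<lambda>(x, y). idx_of (rif A) x) ?S"
  proof (rule inj_onI)
    fix p q assume "p \<in> ?S" "q \<in> ?S" "(\<lambda>(x, y). idx_of (rif A) x) p = (\<lambda>(x, y). idx_of (rif A) x) q"
    moreover obtain x y x' y' where pq: "p = (x, y)" "q = (x', y')" by (cases p, cases q)
    ultimately have "(x, y) \<in> ?S" "(x', y') \<in> ?S" and idx: "idx_of (rif A) x = idx_of (rif A) x'"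
      by auto
    then obtain n n' where n: "rif A x = Some (l, n)" "lif B y = Some (l, n)"
      and n': "rif A x' = Some (l, n')" "lif B y' = Some (l, n')"
      using S[of x y] S[of x' y'] by blast
    have "n = n'" using idx n n' by (simp add: idx_of_def)
    then show "p = q"
      using pq interface_index_unique[OF interface_A(2) n(1)] interface_index_unique[OF interface_B(1) n(2)] n'
      by simp
  qed
  have "(\<lambda>(x, y). idx_of (rif A) x) ` ?S = {1..min (label_count (rif A) l) (label_count (lif B) l)}"
  proof
    show "(\<lambda>(x, y). idx_of (rif A) x) ` ?S \<subseteq> {1..min (label_count (rif A) l) (label_count (lif B) l)}"
    proof (rule image_subsetI)
      fix p assume "p \<in> ?S"
      moreover obtain x y where p: "p = (x, y)" by (cases p)
      ultimately obtain n where n: "rif A x = Some (l, n)" "lif B y = Some (l, n)" using S[of x y] by blast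
      then have "1 \<le> n" "n \<le> label_count (rif A) l" "n \<le> label_count (lif B) l"
        using interface_indexD[OF interface_A(2) n(1)] interface_indexD[OF interface_B(1) n(2)] by blast+
      then show "(\<lambda>(x, y). idx_of (rif A) x) p \<in> {1..min (label_count (rif A) l) (label_count (lif B) l)}"
        using p n by (simp add: idx_of_def)
    qed
    show "{1..min (label_count (rif A) l) (label_count (lif B) l)} \<subseteq> (\<lambda>(x, y). idx_of (rif A) x) ` ?S"
    proof
      fix k assume k: "k \<in> {1..min (label_count (rif A) l) (label_count (lif B) l)}"
      then have "1 \<le> k" "k \<le> label_count (rif A) l" "k \<le> label_count (lif B) l" by auto
      then obtain x y where x: "rif A x = Some (l, k)" and "lif B y = Some (l, k)"
        using interface_index_exists[OF interface_A(2)] interface_index_exists[OF interface_B(1)]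
        by metis
      then have "(x, y) \<in> ?S" using S[of x y] x by blast
      then show "k \<in> (\<lambda>(x, y). idx_of (rif A) x) ` ?S" using x by (force simp: idx_of_def)
    qed
  qed
  then show ?thesis unfolding mcount_def using card_image[OF inj] by simp
qed

lemma unmatched_lif_B_index:
  assumes "lif B y = Some (l, n)" "\<not> (\<exists>x. hp A B x y)"
  shows "label_count (rif A) l < n" "mcount A B l < n" "n \<le> label_count (lif B) l"
  using assms matched_lif_B_iff interface_indexD[OF interface_B(1) assms(1)] mcount_eq_min[of l]
  by auto

lemma lif_compose_A:
  assumes x: "x \<in> dom (lif A)"
  shows "lif (A \<bullet> B) (prime A B x) = lif A x"
proof -
  have the_x: "(THE x'. x' \<in> dom (lif A) \<and> prime A B x = prime A B x') = x"
  proof (rule the_equality)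
    fix x' assume "x' \<in> dom (lif A) \<and> prime A B x = prime A B x'"
    then show "x' = x" using prime_inj_on_A in_nodes_A x by metis
  qed (use x in blast)
  have "\<exists>x'. x' \<in> dom (lif A) \<and> prime A B x = prime A B x'" using x by blast
  then show ?thesis unfolding compose_def module.select_convs by (simp only: if_True the_x)
qed

lemma lif_compose_B:
  assumes y: "lif B y = Some (l, n)" and unmatched: "\<not> (\<exists>x. hp A B x y)"
  shows "lif (A \<bullet> B) (prime A B y) = Some (l, label_count (lif A) l + n - mcount A B l)"
proof -
  have y_B: "y \<in> nodes B" using in_nodes_B(1) y by blast
  have not_A: "\<not> (\<exists>x. x \<in> dom (lif A) \<and> prime A B y = prime A B x)"
  proof
    assume "\<exists>x. x \<in> dom (lif A) \<and> prime A B y = prime A B x"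
    then obtain x where x: "x \<in> dom (lif A)" "prime A B y = prime A B x" by blast
    then have "y = x \<or> hp A B y x \<or> hp A B x y" by (simp add: prime_eq_iff)
    then show False using in_nodes_A(1)[OF x(1)] y_B unmatched disjoint not_hp_from_B by blast
  qed
  have the_y: "(THE x. x \<in> dom (lif B) \<and> \<not> (\<exists>z. hp A B z x) \<and> prime A B y = prime A B x) = y"
  proof (rule the_equality)
    fix x assume "x \<in> dom (lif B) \<and> \<not> (\<exists>z. hp A B z x) \<and> prime A B y = prime A B x"
    then show "x = y" using prime_inj_on_B in_nodes_B y_B by metis
  qed (use y unmatched in blast)
  have "\<exists>x. x \<in> dom (lif B) \<and> \<not> (\<exists>z. hp A B z x) \<and> prime A B y = prime A B x"
    using y unmatched by blast
  then have "lif (A \<bullet> B) (prime A B y) = Some (lab_of (lif B) y,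
      card (with_label (lif A) (lab_of (lif B) y)) + idx_of (lif B) y - mcount A B (lab_of (lif B) y))"
    unfolding compose_def module.select_convs Let_def by (simp only: not_A if_False if_True the_y)
  then show ?thesis using y by (simp add: lab_of_def idx_of_def label_count_def)
qed

lemma lif_compose_None_A:
  assumes x: "x \<in> nodes A" "lif A x = None"
  shows "lif (A \<bullet> B) (prime A B x) = None"
proof -
  have "\<not> (\<exists>x'. x' \<in> dom (lif A) \<and> prime A B x = prime A B x')"
    using x prime_inj_on_A in_nodes_A by (metis domIff)
  moreover have "\<not> (\<exists>y. y \<in> dom (lif B) \<and> \<not> (\<exists>z. hp A B z y) \<and> prime A B x = prime A B y)"
  proof
    assume "\<exists>y. y \<in> dom (lif B) \<and> \<not> (\<exists>z. hp A B z y) \<and> prime A B x = prime A B y"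
    then obtain y where y: "y \<in> dom (lif B)" "\<not> (\<exists>z. hp A B z y)" "prime A B x = prime A B y" by blast
    then have "x = y \<or> hp A B x y \<or> hp A B y x" by (simp add: prime_eq_iff)
    then show False using y in_nodes_B(1)[OF y(1)] x(1) disjoint not_hp_from_B by blast
  qed
  ultimately show ?thesis unfolding compose_def module.select_convs by (simp only: if_False)
qed

lemma lif_compose_None_B:
  assumes y: "y \<in> nodes B" "lif B y = None"
  shows "lif (A \<bullet> B) (prime A B y) = None"
proof -
  have "\<not> (\<exists>x. x \<in> dom (lif A) \<and> prime A B y = prime A B x)"
  proof
    assume "\<exists>x. x \<in> dom (lif A) \<and> prime A B y = prime A B x"
    then obtain x where x: "x \<in> dom (lif A)" "prime A B y = prime A B x" by blast
    then have "y = x \<or> hp A B y x \<or> hp A B x y" by (simp add: prime_eq_iff)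
    moreover have "\<not> hp A B x y" using hpD y(2) by force
    ultimately show False using in_nodes_A(1)[OF x(1)] y(1) disjoint not_hp_from_B by blast
  qed
  moreover have "\<not> (\<exists>y'. y' \<in> dom (lif B) \<and> \<not> (\<exists>z. hp A B z y') \<and> prime A B y = prime A B y')"
    using y prime_inj_on_B in_nodes_B by (metis domIff)
  ultimately show ?thesis unfolding compose_def module.select_convs by (simp only: if_False)
qed

lemma lif_compose_SomeE:
  assumes "lif (A \<bullet> B) s = Some (l, k)"
  obtains (A) x where "lif A x = Some (l, k)" "s = prime A B x"
  | (B) y n where "lif B y = Some (l, n)" "\<not> (\<exists>x. hp A B x y)" "s = prime A B y"
      "k = label_count (lif A) l + n - mcount A B l"
proof -
  consider (A) "\<exists>x. x \<in> dom (lif A) \<and> s = prime A B x"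
    | (B) "\<exists>y. y \<in> dom (lif B) \<and> \<not> (\<exists>x. hp A B x y) \<and> s = prime A B y"
    | (neither) "\<not> (\<exists>x. x \<in> dom (lif A) \<and> s = prime A B x)"
        "\<not> (\<exists>y. y \<in> dom (lif B) \<and> \<not> (\<exists>x. hp A B x y) \<and> s = prime A B y)"
    by blast
  then show ?thesis
  proof cases
    case A
    then obtain x where x: "x \<in> dom (lif A)" "s = prime A B x" by blast
    then have "lif A x = Some (l, k)" using lif_compose_A assms by simp
    then show ?thesis using that(1) x(2) by blast
  next
    case B
    then obtain y l' n where y: "lif B y = Some (l', n)" "\<not> (\<exists>x. hp A B x y)" "s = prime A B y"
      by auto
    have "lif (A \<bullet> B) s = Some (l', label_count (lif A) l' + n - mcount A B l')"
      using lif_compose_B[OF y(1,2)] y(3) by simp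
    then have "l' = l" "k = label_count (lif A) l + n - mcount A B l" using assms by simp_all
    then show ?thesis using that(2) y by blast
  next
    case neither
    then have "lif (A \<bullet> B) s = None"
      unfolding compose_def module.select_convs by (simp only: if_False)
    then show ?thesis using assms by simp
  qed
qed

lemma dom_lif_compose: "dom (lif (A \<bullet> B)) \<subseteq> nodes (A \<bullet> B)"
proof
  fix s assume "s \<in> dom (lif (A \<bullet> B))"
  then obtain l k where "lif (A \<bullet> B) s = Some (l, k)" by auto
  then show "s \<in> nodes (A \<bullet> B)"
    by (cases rule: lif_compose_SomeE) (auto simp: nodes_compose intro: in_nodes_A(1) in_nodes_B(1))
qed

text \<open>Unmatched nodes of B are numbered after all left-interface nodes of A, so their
  indices never clash with those inherited from A.\<close>
lemma lif_compose_index_unique: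
  assumes s: "lif (A \<bullet> B) s = Some (l, k)" and t: "lif (A \<bullet> B) t = Some (l, k)"
  shows "s = t"
proof -
  have within_A: "k \<le> label_count (lif A) l" if "lif A x = Some (l, k)" for x
    using interface_indexD[OF interface_A(1) that] by blast
  have beyond_A: "label_count (lif A) l < k"
    if "lif B y = Some (l, n)" "\<not> (\<exists>x. hp A B x y)" "k = label_count (lif A) l + n - mcount A B l"
    for y n
    using unmatched_lif_B_index[OF that(1,2)] that(3) by linarith
  from s show ?thesis
  proof (cases rule: lif_compose_SomeE)
    case (A x)
    note x = this
    from t show ?thesis
    proof (cases rule: lif_compose_SomeE)
      case (A x')
      then show ?thesis using x interface_index_unique[OF interface_A(1) x(1) A(1)] by simp
    next
      case (B y n)
      then show ?thesis using within_A[OF x(1)] beyond_A[OF B(1,2,4)] by linarith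
    qed
  next
    case (B y n)
    note y = this
    from t show ?thesis
    proof (cases rule: lif_compose_SomeE)
      case (A x)
      then show ?thesis using within_A[OF A(1)] beyond_A[OF y(1,2,4)] by linarith
    next
      case (B y' n')
      have "n = n'"
        using unmatched_lif_B_index[OF y(1,2)] unmatched_lif_B_index[OF B(1,2)] y(4) B(4) by linarith
      then show ?thesis using y B interface_index_unique[OF interface_B(1) y(1), of y'] by simp
    qed
  qed
qed

lemma interface_lif_compose:
  "interface \<Sigma> (lif (A \<bullet> B)) \<and>
   (\<forall>l. label_count (lif (A \<bullet> B)) l = label_count (lif A) l + label_count (lif B) l - mcount A B l)"
proof (rule interfaceI_label_count)
  show "finite (dom (lif (A \<bullet> B)))"
    using module_A module_B
    by (intro finite_subset[OF dom_lif_compose]) (simp add: nodes_compose is_module_def)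
next
  fix s l k assume "lif (A \<bullet> B) s = Some (l, k)"
  then show "l \<in> \<Sigma> \<and> 1 \<le> k \<and> k \<le> label_count (lif A) l + label_count (lif B) l - mcount A B l"
  proof (cases rule: lif_compose_SomeE)
    case (A x)
    then show ?thesis using interface_indexD[OF interface_A(1)] mcount_eq_min[of l] by fastforce
  next
    case (B y n)
    then show ?thesis
      using unmatched_lif_B_index[OF B(1,2)] interface_indexD[OF interface_B(1) B(1)] by auto
  qed
next
  fix l k assume k: "1 \<le> k" "k \<le> label_count (lif A) l + label_count (lif B) l - mcount A B l"
  show "\<exists>s. lif (A \<bullet> B) s = Some (l, k)"
  proof (cases "k \<le> label_count (lif A) l")
    case True
    with k(1) obtain x where "lif A x = Some (l, k)" by (rule interface_index_exists[OF interface_A(1)])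
    then show ?thesis using lif_compose_A by (metis domI)
  next
    case False
    define n where "n = k - label_count (lif A) l + mcount A B l"
    have n: "1 \<le> n" "n \<le> label_count (lif B) l" "label_count (rif A) l < n"
      using False k mcount_eq_min[of l] by (auto simp: n_def)
    then obtain y where y: "lif B y = Some (l, n)" by (meson interface_index_exists[OF interface_B(1)])
    have "\<not> (\<exists>x. hp A B x y)" using matched_lif_B_iff[OF y] n by simp
    moreover have "label_count (lif A) l + n - mcount A B l = k"
      using False mcount_eq_min[of l] by (auto simp: n_def)
    ultimately show ?thesis using lif_compose_B[OF y] by metis
  qed
next
  fix s t l k assume "lif (A \<bullet> B) s = Some (l, k)" "lif (A \<bullet> B) t = Some (l, k)"
  then show "s = t" by (rule lif_compose_index_unique)
qed

lemma module_pair_dual: "module_pair \<Sigma> (dual B) (dual A)"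
  using module_A module_B disjoint by unfold_locales (auto simp: is_module_dual)

lemma rif_compose_eq_lif_dual: "rif (A \<bullet> B) = lif (dual B \<bullet> dual A)"
  by (metis dual_compose dual_sel(3))

lemma rif_compose_B:
  assumes "x \<in> dom (rif B)"
  shows "rif (A \<bullet> B) (prime A B x) = rif B x"
proof -
  interpret D: module_pair \<Sigma> "dual B" "dual A" by (rule module_pair_dual)
  show ?thesis using D.lif_compose_A[of x] assms by (simp add: rif_compose_eq_lif_dual prime_dual)
qed

lemma rif_compose_A:
  assumes "rif A x = Some (l, n)" "\<not> (\<exists>y. hp A B x y)"
  shows "rif (A \<bullet> B) (prime A B x) = Some (l, label_count (rif B) l + n - mcount A B l)"
proof -
  interpret D: module_pair \<Sigma> "dual B" "dual A" by (rule module_pair_dual)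
  show ?thesis using D.lif_compose_B[of x l n] assms
    by (simp add: rif_compose_eq_lif_dual prime_dual hp_dual mcount_dual)
qed

lemma rif_compose_SomeE:
  assumes "rif (A \<bullet> B) s = Some (l, k)"
  obtains (B) x where "rif B x = Some (l, k)" "s = prime A B x"
  | (A) x n where "rif A x = Some (l, n)" "\<not> (\<exists>y. hp A B x y)" "s = prime A B x"
      "k = label_count (rif B) l + n - mcount A B l"
proof -
  interpret D: module_pair \<Sigma> "dual B" "dual A" by (rule module_pair_dual)
  from assms have "lif (dual B \<bullet> dual A) s = Some (l, k)" by (simp add: rif_compose_eq_lif_dual)
  then show ?thesis
  proof (cases rule: D.lif_compose_SomeE)
    case (A x)
    then show ?thesis using that(1) by (simp add: prime_dual)
  next
    case (B x n)
    then show ?thesis using that(2) by (simp add: prime_dual hp_dual mcount_dual)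
  qed
qed

lemma interface_rif_compose:
  "interface \<Sigma> (rif (A \<bullet> B)) \<and>
   (\<forall>l. label_count (rif (A \<bullet> B)) l = label_count (rif B) l + label_count (rif A) l - mcount A B l)"
proof -
  interpret D: module_pair \<Sigma> "dual B" "dual A" by (rule module_pair_dual)
  show ?thesis using D.interface_lif_compose by (simp add: rif_compose_eq_lif_dual mcount_dual)
qed

lemma dom_rif_compose: "dom (rif (A \<bullet> B)) \<subseteq> nodes (A \<bullet> B)"
proof -
  interpret D: module_pair \<Sigma> "dual B" "dual A" by (rule module_pair_dual)
  show ?thesis using D.dom_lif_compose
    by (simp add: rif_compose_eq_lif_dual nodes_compose prime_dual Un_commute)
qed

text \<open>A node carrying both interfaces of the composite comes from a single node of A or B,
  or from a harmonic pair, whose two ends share their label.\<close>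
lemma compose_same_label:
  assumes L: "lif (A \<bullet> B) s = Some (l, k)" and R: "rif (A \<bullet> B) s = Some (l', k')"
  shows "l = l'"
  using L
proof (cases rule: lif_compose_SomeE)
  case (A x)
  note x = this
  from R show ?thesis
  proof (cases rule: rif_compose_SomeE)
    case (B z)
    have "x \<in> nodes A" "z \<in> nodes B" using x(1) B(1) in_nodes_A(1) in_nodes_B(2) by blast+
    moreover have "x = z \<or> hp A B x z \<or> hp A B z x" using x(2) B(2) prime_eq_iff by blast
    ultimately have hp: "hp A B x z" using not_hp_from_B disjoint by blast
    obtain l0 n where r: "rif A x = Some (l0, n)" using hpD[OF hp] by (metis not_None_eq surj_pair)
    then have "lif B z = Some (l0, n)" using hpD[OF hp] by simp
    then show ?thesis using same_label_A[OF x(1) r] same_label_B[OF _ B(1)] by blast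
  next
    case (A z)
    have "x \<in> nodes A" "z \<in> nodes A" using x(1) A(1) in_nodes_A by blast+
    then have "x = z" using prime_inj_on_A x(2) A(3) by metis
    then show ?thesis using same_label_A x(1) A(1) by blast
  qed
next
  case (B y n)
  note y = this
  from R show ?thesis
  proof (cases rule: rif_compose_SomeE)
    case (B z)
    have "y \<in> nodes B" "z \<in> nodes B" using y(1) B(1) in_nodes_B by blast+
    then have "y = z" using prime_inj_on_B y(3) B(2) by metis
    then show ?thesis using same_label_B y(1) B(1) by blast
  next
    case (A z n')
    have "y \<in> nodes B" "z \<in> nodes A" using y(1) A(1) in_nodes_B(1) in_nodes_A(2) by blast+
    moreover have "y = z \<or> hp A B y z \<or> hp A B z y" using y(3) A(3) prime_eq_iff by blast
    ultimately show ?thesis using y(2) not_hp_from_B disjoint by blast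
  qed
qed

lemma is_module_compose: "is_module \<Sigma> (A \<bullet> B)"
proof -
  have "finite \<Sigma>" "finite (nodes (A \<bullet> B))" "edges (A \<bullet> B) \<subseteq> nodes (A \<bullet> B) \<times> nodes (A \<bullet> B)"
    using module_A module_B by (auto simp: is_module_def nodes_compose edges_compose)
  moreover have "\<forall>s \<in> dom (lif (A \<bullet> B)) \<inter> dom (rif (A \<bullet> B)).
      lab_of (lif (A \<bullet> B)) s = lab_of (rif (A \<bullet> B)) s"
    using compose_same_label by (fastforce simp: lab_of_def)
  ultimately show ?thesis
    using dom_lif_compose dom_rif_compose interface_lif_compose interface_rif_compose
    unfolding is_module_def by blast
qed

end

section \<open>Isomorphism from a common cover\<close>

lemma bij_betw_common_cover:
  assumes same_fibres: "\<And>v w. v \<in> V \<Longrightarrow> w \<in> V \<Longrightarrow> f v = f w \<longleftrightarrow> g v = g w"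
  obtains h where "bij_betw h (f ` V) (g ` V)" "\<And>v. v \<in> V \<Longrightarrow> h (f v) = g v"
proof
  define h where "h S = g (SOME v. v \<in> V \<and> f v = S)" for S
  show h_f: "h (f v) = g v" if v: "v \<in> V" for v
  proof -
    have "(SOME v'. v' \<in> V \<and> f v' = f v) \<in> V \<and> f (SOME v'. v' \<in> V \<and> f v' = f v) = f v"
      by (rule someI_ex) (use v in blast)
    then show ?thesis unfolding h_def using same_fibres v by blast
  qed
  show "bij_betw h (f ` V) (g ` V)"
  proof (rule bij_betw_imageI)
    show "inj_on h (f ` V)"
    proof (rule inj_onI)
      fix S T assume "S \<in> f ` V" "T \<in> f ` V" "h S = h T"
      then show "S = T" using h_f same_fibres by (metis imageE)
    qed
    show "h ` f ` V = g ` V"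
      by (simp add: image_image h_f cong: image_cong)
  qed
qed

lemma module_iso_of_common_cover:
  assumes nodes_G: "nodes G = f ` V" and nodes_H: "nodes H = g ` V"
    and same_fibres: "\<And>v w. v \<in> V \<Longrightarrow> w \<in> V \<Longrightarrow> f v = f w \<longleftrightarrow> g v = g w"
    and E: "E \<subseteq> V \<times> V"
    and edges_G: "edges G = (\<lambda>(x, z). (f x, f z)) ` E"
    and edges_H: "edges H = (\<lambda>(x, z). (g x, g z)) ` E"
    and interfaces: "\<And>v. v \<in> V \<Longrightarrow> lif H (g v) = lif G (f v) \<and> rif H (g v) = rif G (f v)"
    and dom_G: "dom (lif G) \<subseteq> nodes G" "dom (rif G) \<subseteq> nodes G"
    and dom_H: "dom (lif H) \<subseteq> nodes H" "dom (rif H) \<subseteq> nodes H"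
  shows "module_iso G H"
proof -
  obtain h where bij: "bij_betw h (f ` V) (g ` V)" and h_f: "\<And>v. v \<in> V \<Longrightarrow> h (f v) = g v"
    using bij_betw_common_cover same_fibres by metis
  have "(x, z) \<in> edges G \<longleftrightarrow> (h x, h z) \<in> edges H" if xz: "x \<in> nodes G" "z \<in> nodes G" for x z
  proof -
    obtain v w where vw: "v \<in> V" "w \<in> V" "x = f v" "z = f w" using xz nodes_G by auto
    have "(f v, f w) \<in> edges G \<longleftrightarrow> (\<exists>(a, b) \<in> E. f v = f a \<and> f w = f b)"
      unfolding edges_G by auto
    also have "\<dots> \<longleftrightarrow> (\<exists>(a, b) \<in> E. g v = g a \<and> g w = g b)"
    proof (rule bex_cong[OF refl])
      fix p assume "p \<in> E"
      then obtain a b where "p = (a, b)" "a \<in> V" "b \<in> V" using E by blast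
      then show "(case p of (a, b) \<Rightarrow> f v = f a \<and> f w = f b) \<longleftrightarrow>
        (case p of (a, b) \<Rightarrow> g v = g a \<and> g w = g b)"
        using same_fibres vw(1,2) by simp
    qed
    also have "\<dots> \<longleftrightarrow> (g v, g w) \<in> edges H"
      unfolding edges_H by auto
    finally show ?thesis using vw h_f by simp
  qed
  moreover have "lif H (h x) = lif G x \<and> rif H (h x) = rif G x" if "x \<in> nodes G" for x
    using that nodes_G interfaces h_f by auto
  ultimately show ?thesis
    unfolding module_iso_def nodes_G nodes_H using bij dom_G dom_H nodes_G nodes_H by auto
qed

section \<open>Associativity\<close>

definition left_assoc_node :: "('v, 'l) module \<Rightarrow> ('v, 'l) module \<Rightarrow> ('v, 'l) module \<Rightarrow> 'v \<Rightarrow> 'v set set"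
  where "left_assoc_node A B C v = prime (A \<bullet> B) (lift C) (prime A B v)"

definition right_assoc_node :: "('v, 'l) module \<Rightarrow> ('v, 'l) module \<Rightarrow> ('v, 'l) module \<Rightarrow> 'v \<Rightarrow> 'v set set"
  where "right_assoc_node A B C v = prime (lift A) (B \<bullet> C) (prime B C v)"

lemma left_assoc_node_dual: "left_assoc_node (dual C) (dual B) (dual A) = right_assoc_node A B C"
  by (rule ext) (simp add: left_assoc_node_def right_assoc_node_def prime_dual
      dual_compose[symmetric] dual_lift[symmetric])

lemma right_assoc_node_dual: "right_assoc_node (dual C) (dual B) (dual A) = left_assoc_node A B C"
  by (rule ext) (simp add: left_assoc_node_def right_assoc_node_def prime_dual
      dual_compose[symmetric] dual_lift[symmetric])

locale module_triple =
  fixes \<Sigma> :: "'l set" and A B C :: "('v, 'l) module"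
  assumes module_A: "is_module \<Sigma> A" and module_B: "is_module \<Sigma> B" and module_C: "is_module \<Sigma> C"
    and disjoint_AB: "nodes A \<inter> nodes B = {}" and disjoint_AC: "nodes A \<inter> nodes C = {}"
    and disjoint_BC: "nodes B \<inter> nodes C = {}"
begin

abbreviation V :: "'v set" where "V \<equiv> nodes A \<union> nodes B \<union> nodes C"

lemma module_pair_AB: "module_pair \<Sigma> A B" and module_pair_BC: "module_pair \<Sigma> B C"
  using module_A module_B module_C disjoint_AB disjoint_BC by (auto simp: module_pair_def)

lemma composable_left: "composable (A \<bullet> B) (lift C)"
proof -
  have "prime A B x \<noteq> {c}" if "x \<in> nodes A \<union> nodes B" "c \<in> nodes C" for x c
    using mem_prime[of x A B] that disjoint_AC disjoint_BC by auto
  then show ?thesis unfolding composable_def nodes_compose lift_sel by blast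
qed

lemma composable_right: "composable (lift A) (B \<bullet> C)"
proof -
  have "prime B C x \<noteq> {a}" if "x \<in> nodes B \<union> nodes C" "a \<in> nodes A" for x a
    using mem_prime[of x B C] that disjoint_AB disjoint_AC by auto
  then show ?thesis unfolding composable_def nodes_compose lift_sel by blast
qed

lemma module_pair_left: "module_pair \<Sigma> (A \<bullet> B) (lift C)"
  using module_pair.is_module_compose[OF module_pair_AB] is_module_lift(1)[OF module_C]
    composable_left by (simp add: module_pair_def composable_def)

lemma module_pair_right: "module_pair \<Sigma> (lift A) (B \<bullet> C)"
  using module_pair.is_module_compose[OF module_pair_BC] is_module_lift(1)[OF module_A]
    composable_right by (simp add: module_pair_def composable_def)

end

sublocale module_triple \<subseteq> AB: module_pair \<Sigma> A B by (rule module_pair_AB)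
sublocale module_triple \<subseteq> BC: module_pair \<Sigma> B C by (rule module_pair_BC)
sublocale module_triple \<subseteq> L: module_pair \<Sigma> "A \<bullet> B" "lift C" by (rule module_pair_left)
sublocale module_triple \<subseteq> R: module_pair \<Sigma> "lift A" "B \<bullet> C" by (rule module_pair_right)

context module_triple
begin

lemma prime_AB_C: "c \<in> nodes C \<Longrightarrow> prime A B c = {c}"
  using disjoint_AC disjoint_BC by (intro prime_outside) blast

lemma prime_BC_A: "a \<in> nodes A \<Longrightarrow> prime B C a = {a}"
  using disjoint_AB disjoint_AC by (intro prime_outside) blast

lemma label_counts:
  "label_count (lif (A \<bullet> B)) l
     = label_count (lif A) l + label_count (lif B) l - min (label_count (rif A) l) (label_count (lif B) l)"
  "label_count (rif (A \<bullet> B)) l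
     = label_count (rif B) l + label_count (rif A) l - min (label_count (rif A) l) (label_count (lif B) l)"
  "label_count (lif (B \<bullet> C)) l
     = label_count (lif B) l + label_count (lif C) l - min (label_count (rif B) l) (label_count (lif C) l)"
  "label_count (lif (lift A)) l = label_count (lif A) l"
  "label_count (rif (lift A)) l = label_count (rif A) l"
  "label_count (lif (lift C)) l = label_count (lif C) l"
  using AB.interface_lif_compose[THEN conjunct2, rule_format, of l]
    AB.interface_rif_compose[THEN conjunct2, rule_format, of l]
    BC.interface_lif_compose[THEN conjunct2, rule_format, of l]
    is_module_lift(2,3)[OF module_A, of l] is_module_lift(2)[OF module_C, of l]
  by (simp_all only: AB.mcount_eq_min BC.mcount_eq_min)

abbreviation lnode :: "'v \<Rightarrow> 'v set set" where "lnode \<equiv> left_assoc_node A B C"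
abbreviation rnode :: "'v \<Rightarrow> 'v set set" where "rnode \<equiv> right_assoc_node A B C"

lemma assoc_nodes_eq_of_hp_AB:
  assumes hp: "hp A B a b"
  shows "lnode a = lnode b \<and> rnode a = rnode b"
proof -
  obtain p where a: "a \<in> nodes A" and p: "rif A a = Some p" "lif B b = Some p"
    using AB.hpE[OF hp] by metis
  have "lnode a = lnode b" using AB.prime_hp[OF hp] by (simp add: left_assoc_node_def)
  moreover have "lif (B \<bullet> C) (prime B C b) = Some p" using BC.lif_compose_A[of b] p(2) by (simp add: domIff)
  then have "hp (lift A) (B \<bullet> C) {a} (prime B C b)" using R.hpI p(1) by (simp add: lift_sel)
  then have "rnode a = rnode b" using R.prime_hp prime_BC_A[OF a] by (simp add: right_assoc_node_def)
  ultimately show ?thesis ..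
qed

lemma assoc_nodes_eq_of_hp_BC:
  assumes hp: "hp B C b c"
  shows "lnode b = lnode c \<and> rnode b = rnode c"
proof -
  obtain p where c: "c \<in> nodes C" and p: "rif B b = Some p" "lif C c = Some p"
    using BC.hpE[OF hp] by metis
  have "rif (A \<bullet> B) (prime A B b) = Some p" using AB.rif_compose_B[of b] p(1) by (simp add: domIff)
  then have "hp (A \<bullet> B) (lift C) (prime A B b) {c}" using L.hpI p(2) by (simp add: lift_sel)
  then have "lnode b = lnode c" using L.prime_hp prime_AB_C[OF c] by (simp add: left_assoc_node_def)
  moreover have "rnode b = rnode c" using BC.prime_hp[OF hp] by (simp add: right_assoc_node_def)
  ultimately show ?thesis ..
qed

lemma assoc_nodes_eq_of_prime_AB:
  "prime A B x = prime A B z \<Longrightarrow> lnode x = lnode z \<and> rnode x = rnode z"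
  using AB.prime_eq_iff assoc_nodes_eq_of_hp_AB by metis

text \<open>A right-interface node of A unmatched in A \<bullet> B and a left-interface node of C unmatched
  in B \<bullet> C are renumbered past the matched indices of B; both bracketings pair them exactly when
  the renumbered indices agree, and this is the same balance condition on both sides.\<close>
lemma hp_AC_through_B:
  assumes a: "rif A a = Some (l, na)" and c: "lif C c = Some (l, nc)"
    and unmatched_a: "\<not> (\<exists>b. hp A B a b)" and unmatched_c: "\<not> (\<exists>b. hp B C b c)"
    and balance: "label_count (rif B) l + na = label_count (lif B) l + nc"
  shows "hp (A \<bullet> B) (lift C) (prime A B a) {c}" and "hp (lift A) (B \<bullet> C) {a} (prime B C c)"
proof -
  have na: "label_count (lif B) l < na" "na \<le> label_count (rif A) l"
    using AB.matched_rif_A_iff[OF a] unmatched_a interface_indexD[OF AB.interface_A(2) a] by auto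
  have nc: "label_count (rif B) l < nc" "nc \<le> label_count (lif C) l"
    using BC.matched_lif_B_iff[OF c] unmatched_c interface_indexD[OF BC.interface_B(1) c] by auto
  have "label_count (rif B) l + na - mcount A B l = nc"
    using AB.mcount_eq_min[of l] na balance by auto
  then have "rif (A \<bullet> B) (prime A B a) = Some (l, nc)" using AB.rif_compose_A[OF a unmatched_a] by simp
  then show "hp (A \<bullet> B) (lift C) (prime A B a) {c}" using L.hpI c by (simp add: lift_sel)
  have "label_count (lif B) l + nc - mcount B C l = na"
    using BC.mcount_eq_min[of l] nc balance by auto
  then have "lif (B \<bullet> C) (prime B C c) = Some (l, na)" using BC.lif_compose_B[OF c unmatched_c] by simp
  then show "hp (lift A) (B \<bullet> C) {a} (prime B C c)" using R.hpI a by (simp add: lift_sel)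
qed

lemma assoc_nodes_eq_of_hp_AC:
  assumes "rif A a = Some (l, na)" "lif C c = Some (l, nc)"
    "\<not> (\<exists>b. hp A B a b)" "\<not> (\<exists>b. hp B C b c)"
    "label_count (rif B) l + na = label_count (lif B) l + nc"
  shows "lnode a = lnode c \<and> rnode a = rnode c"
proof -
  have "a \<in> nodes A" "c \<in> nodes C" using assms(1,2) AB.in_nodes_A(2) BC.in_nodes_B(1) by blast+
  then show ?thesis
    using L.prime_hp[OF hp_AC_through_B(1)[OF assms]] R.prime_hp[OF hp_AC_through_B(2)[OF assms]]
      prime_AB_C prime_BC_A
    by (simp add: left_assoc_node_def right_assoc_node_def)
qed

lemma assoc_nodes_eq_of_hp_left:
  assumes hp: "hp (A \<bullet> B) (lift C) (prime A B x) {c}"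
  shows "lnode x = lnode c \<and> rnode x = rnode c"
proof -
  obtain p where "rif (A \<bullet> B) (prime A B x) = Some p" "lif C c = Some p"
    using L.hpE[OF hp] lift_sel(3) by metis
  then obtain l nc where r: "rif (A \<bullet> B) (prime A B x) = Some (l, nc)" and c: "lif C c = Some (l, nc)"
    by (cases p) auto
  from r show ?thesis
  proof (cases rule: AB.rif_compose_SomeE)
    case (B z)
    have "hp B C z c" using BC.hpI B(1) c by blast
    then show ?thesis using assoc_nodes_eq_of_hp_BC assoc_nodes_eq_of_prime_AB[OF B(2)] by metis
  next
    case (A z n)
    have n: "label_count (lif B) l < n" "n \<le> label_count (rif A) l"
      using AB.matched_rif_A_iff[OF A(1)] A(2) interface_indexD[OF AB.interface_A(2) A(1)] by auto
    then have m: "mcount A B l = label_count (lif B) l" using AB.mcount_eq_min[of l] by simp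
    have unmatched_c: "\<not> (\<exists>b. hp B C b c)"
      using BC.matched_lif_B_iff[OF c] A(4) m n by simp
    have "label_count (rif B) l + n = label_count (lif B) l + nc" using A(4) m n by simp
    then show ?thesis
      using assoc_nodes_eq_of_hp_AC[OF A(1) c A(2) unmatched_c] assoc_nodes_eq_of_prime_AB[OF A(3)]
      by metis
  qed
qed

lemma rnode_eq_of_lnode_eq:
  assumes "lnode v = lnode w"
  shows "rnode v = rnode w"
proof -
  have into_C: "prime A B y = {y}" if "hp (A \<bullet> B) (lift C) s (prime A B y)" for s y
    using L.hpD[OF that] mem_prime[of y A B] by (auto simp: lift_sel)
  have "prime A B v = prime A B w \<or> hp (A \<bullet> B) (lift C) (prime A B v) (prime A B w)
      \<or> hp (A \<bullet> B) (lift C) (prime A B w) (prime A B v)"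
    using assms L.prime_eq_iff by (simp add: left_assoc_node_def)
  then show ?thesis
  proof (elim disjE)
    assume "prime A B v = prime A B w"
    then show ?thesis using assoc_nodes_eq_of_prime_AB by blast
  next
    assume hp: "hp (A \<bullet> B) (lift C) (prime A B v) (prime A B w)"
    then show ?thesis using assoc_nodes_eq_of_hp_left into_C[OF hp] by metis
  next
    assume hp: "hp (A \<bullet> B) (lift C) (prime A B w) (prime A B v)"
    then show ?thesis using assoc_nodes_eq_of_hp_left into_C[OF hp] by metis
  qed
qed

lemma lif_assoc_A:
  assumes a: "a \<in> nodes A"
  shows "lif ((A \<bullet> B) \<bullet> lift C) (lnode a) = lif (lift A \<bullet> (B \<bullet> C)) (rnode a)"
proof -
  have l: "lnode a = prime (A \<bullet> B) (lift C) (prime A B a)" by (simp add: left_assoc_node_def)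
  have r: "rnode a = prime (lift A) (B \<bullet> C) {a}" using prime_BC_A[OF a] by (simp add: right_assoc_node_def)
  have nodes: "prime A B a \<in> nodes (A \<bullet> B)" "{a} \<in> nodes (lift A)"
    using a by (auto simp: nodes_compose lift_sel)
  show ?thesis
  proof (cases "lif A a")
    case None
    then show ?thesis
      using AB.lif_compose_None_A[OF a None] L.lif_compose_None_A[OF nodes(1)]
        R.lif_compose_None_A[OF nodes(2)] l r
      by (simp add: lift_sel)
  next
    case (Some p)
    then have "lif (A \<bullet> B) (prime A B a) = Some p" using AB.lif_compose_A[of a] by (simp add: domIff)
    then show ?thesis
      using L.lif_compose_A[of "prime A B a"] R.lif_compose_A[of "{a}"] Some l r
      by (simp add: domIff lift_sel)
  qed
qed

lemma lif_assoc_B_unmatched: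
  assumes p: "lif B b = Some (l, n)" and unmatched: "\<not> (\<exists>a. hp A B a b)"
  shows "lif ((A \<bullet> B) \<bullet> lift C) (lnode b) = lif (lift A \<bullet> (B \<bullet> C)) (rnode b)"
proof -
  have "lif (A \<bullet> B) (prime A B b) = Some (l, label_count (lif A) l + n - mcount A B l)"
    using AB.lif_compose_B[OF p unmatched] .
  then have left: "lif ((A \<bullet> B) \<bullet> lift C) (lnode b) = Some (l, label_count (lif A) l + n - mcount A B l)"
    using L.lif_compose_A[of "prime A B b"] by (simp add: domIff left_assoc_node_def)
  have BC: "lif (B \<bullet> C) (prime B C b) = Some (l, n)" using BC.lif_compose_A[of b] p by (simp add: domIff)
  have unmatched_R: "\<not> (\<exists>x. hp (lift A) (B \<bullet> C) x (prime B C b))"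
  proof
    assume "\<exists>x. hp (lift A) (B \<bullet> C) x (prime B C b)"
    then obtain x q where "x \<in> nodes (lift A)" "rif (lift A) x = Some q"
      "lif (B \<bullet> C) (prime B C b) = Some q"
      using R.hpE by blast
    then obtain a where "rif A a = Some (l, n)" using BC by (auto simp: lift_sel)
    then show False using AB.hpI p unmatched by blast
  qed
  have right: "lif (lift A \<bullet> (B \<bullet> C)) (rnode b)
      = Some (l, label_count (lif (lift A)) l + n - mcount (lift A) (B \<bullet> C) l)"
    using R.lif_compose_B[OF BC unmatched_R] by (simp add: right_assoc_node_def)
  have "label_count (rif A) l < n" "n \<le> label_count (lif B) l"
    using AB.unmatched_lif_B_index[OF p unmatched] by auto
  then have "mcount (lift A) (B \<bullet> C) l = mcount A B l"
    using R.mcount_eq_min[of l] AB.mcount_eq_min[of l] label_counts(3,5) by (auto simp: min_def)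
  then show ?thesis using left right label_counts by simp
qed

lemma lif_assoc_B:
  assumes b: "b \<in> nodes B"
  shows "lif ((A \<bullet> B) \<bullet> lift C) (lnode b) = lif (lift A \<bullet> (B \<bullet> C)) (rnode b)"
proof (cases "\<exists>a. hp A B a b")
  case True
  then obtain a where hp: "hp A B a b" ..
  then show ?thesis using assoc_nodes_eq_of_hp_AB[OF hp] lif_assoc_A AB.hpD by metis
next
  case unmatched: False
  show ?thesis
  proof (cases "lif B b")
    case None
    have "prime A B b \<in> nodes (A \<bullet> B)" "prime B C b \<in> nodes (B \<bullet> C)"
      using b by (auto simp: nodes_compose)
    then show ?thesis
      using AB.lif_compose_None_B[OF b None] L.lif_compose_None_A
        BC.lif_compose_None_A[OF b None] R.lif_compose_None_B
      by (simp add: left_assoc_node_def right_assoc_node_def)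
  next
    case (Some p)
    then show ?thesis using lif_assoc_B_unmatched unmatched by (cases p) simp
  qed
qed

lemma unmatched_right_of_unmatched_left:
  assumes c: "lif C c = Some (l, n)" and unmatched_B: "\<not> (\<exists>b. hp B C b c)"
    and unmatched_L: "\<not> (\<exists>s. hp (A \<bullet> B) (lift C) s {c})"
  shows "\<not> (\<exists>x. hp (lift A) (B \<bullet> C) x (prime B C c))"
proof
  have uB: "label_count (rif B) l < n" "n \<le> label_count (lif C) l"
    using BC.unmatched_lif_B_index[OF c unmatched_B] by auto
  then have "mcount B C l = label_count (rif B) l" using BC.mcount_eq_min[of l] by simp
  then have BC: "lif (B \<bullet> C) (prime B C c) = Some (l, label_count (lif B) l + n - label_count (rif B) l)"
    using BC.lif_compose_B[OF c unmatched_B] by simp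
  assume "\<exists>x. hp (lift A) (B \<bullet> C) x (prime B C c)"
  then obtain x q where "x \<in> nodes (lift A)" "rif (lift A) x = Some q"
    "lif (B \<bullet> C) (prime B C c) = Some q"
    using R.hpE by blast
  then obtain a where a: "rif A a = Some (l, label_count (lif B) l + n - label_count (rif B) l)"
    using BC by (auto simp: lift_sel)
  have "\<not> (\<exists>b. hp A B a b)" using AB.matched_rif_A_iff[OF a] uB by simp
  then have "hp (A \<bullet> B) (lift C) (prime A B a) {c}"
    using hp_AC_through_B(1)[OF a c _ unmatched_B] uB by simp
  then show False using unmatched_L by blast
qed

lemma lif_assoc_C_unmatched:
  assumes c: "lif C c = Some (l, n)" and unmatched_B: "\<not> (\<exists>b. hp B C b c)"
    and unmatched_L: "\<not> (\<exists>s. hp (A \<bullet> B) (lift C) s {c})"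
  shows "lif ((A \<bullet> B) \<bullet> lift C) (lnode c) = lif (lift A \<bullet> (B \<bullet> C)) (rnode c)"
proof -
  have "c \<in> nodes C" using c BC.in_nodes_B(1) by blast
  then have l: "lnode c = prime (A \<bullet> B) (lift C) {c}" using prime_AB_C by (simp add: left_assoc_node_def)
  have r: "rnode c = prime (lift A) (B \<bullet> C) (prime B C c)" by (simp add: right_assoc_node_def)
  have c': "lif (lift C) {c} = Some (l, n)" using c by (simp add: lift_sel)
  have left: "lif ((A \<bullet> B) \<bullet> lift C) (lnode c)
      = Some (l, label_count (lif (A \<bullet> B)) l + n - mcount (A \<bullet> B) (lift C) l)"
    using L.lif_compose_B[OF c' unmatched_L] l by simp
  have uL: "label_count (rif (A \<bullet> B)) l < n" using L.unmatched_lif_B_index(1)[OF c' unmatched_L] .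
  have uB: "label_count (rif B) l < n" "n \<le> label_count (lif C) l"
    using BC.unmatched_lif_B_index[OF c unmatched_B] by auto
  then have "mcount B C l = label_count (rif B) l" using BC.mcount_eq_min[of l] by simp
  then have BC: "lif (B \<bullet> C) (prime B C c) = Some (l, label_count (lif B) l + n - label_count (rif B) l)"
    using BC.lif_compose_B[OF c unmatched_B] by simp
  have unmatched_R: "\<not> (\<exists>x. hp (lift A) (B \<bullet> C) x (prime B C c))"
    using unmatched_right_of_unmatched_left[OF c unmatched_B unmatched_L] .
  have right: "lif (lift A \<bullet> (B \<bullet> C)) (rnode c) = Some (l, label_count (lif (lift A)) l
      + (label_count (lif B) l + n - label_count (rif B) l) - mcount (lift A) (B \<bullet> C) l)"
    using R.lif_compose_B[OF BC unmatched_R] r by simp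
  have uR: "label_count (rif (lift A)) l < label_count (lif B) l + n - label_count (rif B) l"
    using R.unmatched_lif_B_index(1)[OF BC unmatched_R] .
  txt \<open>For label l, both indices come out as |*A| + |*B| + n - |A*| - |B*|.\<close>
  have "mcount (A \<bullet> B) (lift C) l = label_count (rif (A \<bullet> B)) l"
    using L.mcount_eq_min[of l] uL uB label_counts by simp
  moreover have "mcount (lift A) (B \<bullet> C) l = label_count (rif A) l"
    using R.mcount_eq_min[of l] uR uB label_counts by (simp add: min_def)
  moreover have "min (label_count (rif A) l) (label_count (lif B) l) \<le> label_count (rif A) l"
    "min (label_count (rif A) l) (label_count (lif B) l) \<le> label_count (lif B) l"
    by simp_all
  ultimately show ?thesis using left right uL uB uR label_counts by simp
qed

lemma lif_assoc_C:
  assumes c: "c \<in> nodes C"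
  shows "lif ((A \<bullet> B) \<bullet> lift C) (lnode c) = lif (lift A \<bullet> (B \<bullet> C)) (rnode c)"
proof (cases "lif C c")
  case None
  have "lif (B \<bullet> C) (prime B C c) = None" using BC.lif_compose_None_B[OF c None] .
  moreover have "prime B C c \<in> nodes (B \<bullet> C)" "{c} \<in> nodes (lift C)"
    using c by (auto simp: nodes_compose lift_sel)
  ultimately show ?thesis
    using L.lif_compose_None_B R.lif_compose_None_B None prime_AB_C[OF c]
    by (simp add: left_assoc_node_def right_assoc_node_def lift_sel)
next
  case (Some p)
  then obtain l n where p: "lif C c = Some (l, n)" by (cases p) auto
  show ?thesis
  proof (cases "\<exists>b. hp B C b c")
    case True
    then obtain b where hp: "hp B C b c" ..
    then have "b \<in> nodes B" using BC.hpD by blast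
    then show ?thesis using assoc_nodes_eq_of_hp_BC[OF hp] lif_assoc_B[of b] by simp
  next
    case unmatched_B: False
    show ?thesis
    proof (cases "\<exists>s. hp (A \<bullet> B) (lift C) s {c}")
      case True
      then obtain s where hp: "hp (A \<bullet> B) (lift C) s {c}" ..
      then obtain x where x: "x \<in> nodes A \<union> nodes B" "s = prime A B x"
        using L.hpD by (auto simp: nodes_compose)
      then have "lnode x = lnode c \<and> rnode x = rnode c" using assoc_nodes_eq_of_hp_left hp by simp
      with x(1) show ?thesis using lif_assoc_A lif_assoc_B by (metis Un_iff)
    next
      case False
      then show ?thesis using lif_assoc_C_unmatched[OF p unmatched_B] by blast
    qed
  qed
qed

lemma lif_assoc: "v \<in> V \<Longrightarrow> lif ((A \<bullet> B) \<bullet> lift C) (lnode v) = lif (lift A \<bullet> (B \<bullet> C)) (rnode v)"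
  using lif_assoc_A lif_assoc_B lif_assoc_C by blast

lemma module_triple_dual: "module_triple \<Sigma> (dual C) (dual B) (dual A)"
  using module_A module_B module_C disjoint_AB disjoint_AC disjoint_BC
  by unfold_locales (auto simp: is_module_dual)

lemma dual_left_assoc: "(dual C \<bullet> dual B) \<bullet> lift (dual A) = dual (lift A \<bullet> (B \<bullet> C))"
  and dual_right_assoc: "lift (dual C) \<bullet> (dual B \<bullet> dual A) = dual ((A \<bullet> B) \<bullet> lift C)"
  by (simp_all add: dual_compose dual_lift)

lemma rif_assoc:
  assumes "v \<in> V"
  shows "rif ((A \<bullet> B) \<bullet> lift C) (lnode v) = rif (lift A \<bullet> (B \<bullet> C)) (rnode v)"
proof -
  interpret D: module_triple \<Sigma> "dual C" "dual B" "dual A" by (rule module_triple_dual)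
  show ?thesis
    using D.lif_assoc[of v] assms
    unfolding dual_left_assoc dual_right_assoc left_assoc_node_dual right_assoc_node_dual dual_sel
    by auto
qed

lemma lnode_eq_iff_rnode_eq: "lnode v = lnode w \<longleftrightarrow> rnode v = rnode w"
proof -
  interpret D: module_triple \<Sigma> "dual C" "dual B" "dual A" by (rule module_triple_dual)
  show ?thesis
    using rnode_eq_of_lnode_eq D.rnode_eq_of_lnode_eq
    unfolding left_assoc_node_dual right_assoc_node_dual by blast
qed

lemma nodes_left_assoc: "nodes ((A \<bullet> B) \<bullet> lift C) = lnode ` V"
proof -
  have "(\<lambda>x. {x}) ` nodes C = prime A B ` nodes C" using prime_AB_C by simp
  then show ?thesis
    by (simp add: nodes_compose lift_sel image_Un image_image left_assoc_node_def Un_assoc)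
qed

lemma edges_left_assoc:
  "edges ((A \<bullet> B) \<bullet> lift C) = (\<lambda>(x, z). (lnode x, lnode z)) ` (edges A \<union> edges B \<union> edges C)"
proof -
  have "edges C \<subseteq> nodes C \<times> nodes C" using module_C by (simp add: is_module_def)
  then have "(\<lambda>(x, z). ({x}, {z})) ` edges C = (\<lambda>(x, z). (prime A B x, prime A B z)) ` edges C"
    using prime_AB_C by (auto intro!: image_cong)
  then show ?thesis
    by (simp add: edges_compose lift_sel image_Un image_image left_assoc_node_def case_prod_beta
        Un_assoc)
qed

lemma nodes_right_assoc: "nodes (lift A \<bullet> (B \<bullet> C)) = rnode ` V"
proof -
  interpret D: module_triple \<Sigma> "dual C" "dual B" "dual A" by (rule module_triple_dual)
  show ?thesis
    using D.nodes_left_assoc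
    by (simp add: dual_left_assoc left_assoc_node_dual Un_ac)
qed

lemma edges_right_assoc:
  "edges (lift A \<bullet> (B \<bullet> C)) = (\<lambda>(x, z). (rnode x, rnode z)) ` (edges A \<union> edges B \<union> edges C)"
proof -
  interpret D: module_triple \<Sigma> "dual C" "dual B" "dual A" by (rule module_triple_dual)
  show ?thesis
    using D.edges_left_assoc
    by (simp add: dual_left_assoc left_assoc_node_dual Un_ac)
qed

lemma module_iso_assoc: "module_iso ((A \<bullet> B) \<bullet> lift C) (lift A \<bullet> (B \<bullet> C))"
proof (rule module_iso_of_common_cover)
  show "nodes ((A \<bullet> B) \<bullet> lift C) = lnode ` V" by (rule nodes_left_assoc)
  show "nodes (lift A \<bullet> (B \<bullet> C)) = rnode ` V" by (rule nodes_right_assoc)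
  show "lnode v = lnode w \<longleftrightarrow> rnode v = rnode w" for v w by (rule lnode_eq_iff_rnode_eq)
  show "edges A \<union> edges B \<union> edges C \<subseteq> V \<times> V"
    using module_A module_B module_C by (auto simp: is_module_def)
  show "edges ((A \<bullet> B) \<bullet> lift C) = (\<lambda>(x, z). (lnode x, lnode z)) ` (edges A \<union> edges B \<union> edges C)"
    by (rule edges_left_assoc)
  show "edges (lift A \<bullet> (B \<bullet> C)) = (\<lambda>(x, z). (rnode x, rnode z)) ` (edges A \<union> edges B \<union> edges C)"
    by (rule edges_right_assoc)
  show "lif (lift A \<bullet> (B \<bullet> C)) (rnode v) = lif ((A \<bullet> B) \<bullet> lift C) (lnode v) \<and>
      rif (lift A \<bullet> (B \<bullet> C)) (rnode v) = rif ((A \<bullet> B) \<bullet> lift C) (lnode v)" if "v \<in> V" for v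
    using lif_assoc[OF that] rif_assoc[OF that] by simp
qed (use L.dom_lif_compose L.dom_rif_compose R.dom_lif_compose R.dom_rif_compose in blast)+

end

theorem mainTheorem1:
  fixes \<Sigma> :: "'l set" and A B C :: "('v, 'l) module"
  assumes "is_module \<Sigma> A" and "is_module \<Sigma> B" and "is_module \<Sigma> C"
    and "nodes A \<inter> nodes B = {}" and "nodes A \<inter> nodes C = {}" and "nodes B \<inter> nodes C = {}"
  shows "composable (A \<bullet> B) (lift C) \<and> composable (lift A) (B \<bullet> C) \<and>
         is_module \<Sigma> ((A \<bullet> B) \<bullet> lift C) \<and> is_module \<Sigma> (lift A \<bullet> (B \<bullet> C)) \<and>
         module_iso ((A \<bullet> B) \<bullet> lift C) (lift A \<bullet> (B \<bullet> C))"
proof -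
  interpret module_triple \<Sigma> A B C using assms by unfold_locales
  show ?thesis
    using composable_left composable_right L.is_module_compose R.is_module_compose module_iso_assoc
    by blast
qed

end
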